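(* Assume the inverse Jacobian $J=\frac{d\mathbb P}{d(\mathbb P\circ T)}$ has a version which is continuous on $\Omega_S$. Let $\omega\in\Omega_{\mathbb P}$ be a periodic point with minimal period $r\ge1$. Then $\lim_{n\to\infty}\beta_{\omega,n}$ exists and equals $\prod_{j=0}^{r-1}J(T^j\omega)$ (with $J$ the continuous version).
   Context: Let $\mathcal A$ be a finite or countable set with $|\mathcal A|>1$, $\Omega=\mathcal A^{\mathbb N}$ with the product of discrete topologies, $\mathcal F$ the σ-algebra generated by coordinate projections, $T$ the left shift, and $\mathbb P$ a $T$-invariant ψ-mixing probability measure (there is $\psi_m\to0$ with $|\mathbb P(E\cap T^{-(n+m)}F)-\mathbb P(E)\mathbb P(F)|\le\psi_m\mathbb P(E)\mathbb P(F)$ for all $m,n$, $E\in\mathcal F_{\{0,\dots,n-1\}}$, $F\in\mathcal F$). Let $S=(S_{a,b})_{a,b\in\mathcal A}$ be a $0$–$1$ matrix with no zero rows or columns, $\Omega_S=\{\omega:S_{\omega_j,\omega_{j+1}}=1\ \forall j\ge0\}$ with the subspace topology, $\mathcal F_S=\{E\in\mathcal F:E\subset\Omega_S\}$; assume $\mathbb P(\Omega_S)=1$ and $T:\Omega_S\to\Omega_S$ is topologically mixing. For $E\in\mathcal F_S$ define $\mathbb P\circ T(E)=\sum_{a\in\mathcal A}\mathbb P(T(E\cap[a]))$; this is a σ-finite measure on $(\Omega_S,\mathcal F_S)$ with $\mathbb P\ll\mathbb P\circ T$, and the inverse Jacobian is $J=\frac{d\mathbb P}{d(\mathbb P\circ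 T)}$. Cylinders $[a_0,\dots,a_{n-1}]=\{\omega:\omega_j=a_j,0\le j<n\}$, $A_n^\omega=[\omega_0,\dots,\omega_{n-1}]$, $\Omega_{\mathbb P}=\{\omega:\mathbb P(A_n^\omega)>0\ \forall n\}$; $\omega$ periodic with minimal period $r$ means $r=\min\{j\ge1:T^j\omega=\omega\}<\infty$; $\beta_{\omega,n}=\mathbb P(A^\omega_{n+r}\mid A^\omega_n)$. *)

theory Defs
  imports "HOL-Probability.Probability"
begin

definition shift :: "(nat \<Rightarrow> 'a) \<Rightarrow> (nat \<Rightarrow> 'a)" where
  "shift \<omega> = (\<lambda>n. \<omega> (Suc n))"

definition seq_space :: "(nat \<Rightarrow> 'a) measure" where
  "seq_space = PiM UNIV (\<lambda>_. count_space UNIV)"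

definition coord_sets :: "nat \<Rightarrow> (nat \<Rightarrow> 'a) set set" where
  "coord_sets n = sigma_sets UNIV {{\<omega>. \<omega> i \<in> B} | i B. i < n}"

definition cyl1 :: "'a \<Rightarrow> (nat \<Rightarrow> 'a) set" where
  "cyl1 a = {\<eta>. \<eta> 0 = a}"

definition cylA :: "nat \<Rightarrow> (nat \<Rightarrow> 'a) \<Rightarrow> (nat \<Rightarrow> 'a) set" where
  "cylA n \<omega> = {\<eta>. \<forall>j<n. \<eta> j = \<omega> j}"

definition psi_mixing :: "(nat \<Rightarrow> 'a) measure \<Rightarrow> bool" where
  "psi_mixing P \<longleftrightarrow> (\<exists>\<psi> :: nat \<Rightarrow> real. \<psi> \<longlonglongrightarrow> 0 \<and>
     (\<forall>m n E F. E \<in> coord_sets n \<longrightarrow> F \<in> sets P \<longrightarrow>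
        \<bar>measure P (E \<inter> (shift ^^ (n + m)) -` F) - measure P E * measure P F\<bar>
          \<le> \<psi> m * measure P E * measure P F))"

definition Omega_S :: "('a \<Rightarrow> 'a \<Rightarrow> bool) \<Rightarrow> (nat \<Rightarrow> 'a) set" where
  "Omega_S S = {\<omega>. \<forall>j. S (\<omega> j) (\<omega> (Suc j))}"

definition seq_topology :: "(nat \<Rightarrow> 'a) topology" where
  "seq_topology = product_topology (\<lambda>_. discrete_topology UNIV) UNIV"

definition topologically_mixing :: "'b topology \<Rightarrow> ('b \<Rightarrow> 'b) \<Rightarrow> bool" where
  "topologically_mixing X f \<longleftrightarrow>
     (\<forall>U V. openin X U \<longrightarrow> openin X V \<longrightarrow> U \<noteq> {} \<longrightarrow> V \<noteq> {} \<longrightarrow>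
        (\<exists>N. \<forall>n\<ge>N. {x \<in> topspace X. (f ^^ n) x \<in> U} \<inter> V \<noteq> {}))"

definition PT_measure :: "('a \<Rightarrow> 'a \<Rightarrow> bool) \<Rightarrow> (nat \<Rightarrow> 'a) measure \<Rightarrow> (nat \<Rightarrow> 'a) measure" where
  "PT_measure S P = measure_of (Omega_S S) {E \<in> sets P. E \<subseteq> Omega_S S}
     (\<lambda>E. \<integral>\<^sup>+ a. emeasure P (shift ` (E \<inter> cyl1 a)) \<partial>count_space UNIV)"

definition inv_jacobian_version ::
  "('a \<Rightarrow> 'a \<Rightarrow> bool) \<Rightarrow> (nat \<Rightarrow> 'a) measure \<Rightarrow> ((nat \<Rightarrow> 'a) \<Rightarrow> real) \<Rightarrow> bool" where
  "inv_jacobian_version S P J \<longleftrightarrow>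
     J \<in> borel_measurable (PT_measure S P) \<and> (\<forall>x\<in>Omega_S S. 0 \<le> J x) \<and>
     density (PT_measure S P) (\<lambda>x. ennreal (J x)) = restrict_space P (Omega_S S)"

definition Omega_P :: "(nat \<Rightarrow> 'a) measure \<Rightarrow> (nat \<Rightarrow> 'a) set" where
  "Omega_P P = {\<omega>. \<forall>n. measure P (cylA n \<omega>) > 0}"

definition min_period :: "('b \<Rightarrow> 'b) \<Rightarrow> 'b \<Rightarrow> nat \<Rightarrow> bool" where
  "min_period f x r \<longleftrightarrow> 1 \<le> r \<and> (f ^^ r) x = x \<and> (\<forall>j. 1 \<le> j \<and> j < r \<longrightarrow> (f ^^ j) x \<noteq> x)"

definition beta :: "(nat \<Rightarrow> 'a) measure \<Rightarrow> nat \<Rightarrow> (nat \<Rightarrow> 'a) \<Rightarrow> nat \<Rightarrow> real" where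
  "beta P r \<omega> n = measure P (cylA (n + r) \<omega> \<inter> cylA n \<omega>) / measure P (cylA n \<omega>)"

end

theory Submission
  imports Defs
begin

(*
  Write p_j(m) = P(A_m^{T^j omega}).  Since T^r omega = omega, beta_{omega,n} = p_0(n+r)/p_0(n)
  telescopes into the product over j < r of the one-step ratios
  step_ratio (T^j omega) m = P(A_{m+1}^{T^j omega}) / P(A_m^{T^{j+1} omega}),  m = n + r - 1 - j,
  so it suffices that step_ratio eta m tends to J eta for every eta charged by P.  For eta in
  Omega_S the measure P o T gives A_{m+1}^eta (inside Omega_S) the mass P(A_m^{T eta}); since
  P = J d(P o T) and J is continuous, J is within epsilon of J eta on deep cylinders around
  eta, so P(A_{m+1}^eta) lies between (J eta -+ epsilon) P(A_m^{T eta}).  Positivity of all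
  p_j follows from shift invariance.
*)

section \<open>Cylinders and the prepending map\<close>

lemma space_seq_space [simp]: "space seq_space = UNIV"
  by (simp add: seq_space_def space_PiM)

lemma coordinate_set_measurable: "{\<eta>::nat\<Rightarrow>'a. \<eta> j = c} \<in> sets seq_space"
proof -
  have "(\<lambda>\<eta>::nat\<Rightarrow>'a. \<eta> j) \<in> measurable seq_space (count_space UNIV)"
    unfolding seq_space_def by (rule measurable_component_singleton) simp
  from measurable_sets[OF this, of "{c}"] show ?thesis by (simp add: vimage_def)
qed

lemma cylA_Suc: "cylA (Suc n) \<omega> = cylA n \<omega> \<inter> {\<eta>. \<eta> n = \<omega> n}"
  by (auto simp: cylA_def less_Suc_eq)

lemma cylA_antimono: "m \<le> n \<Longrightarrow> cylA n \<omega> \<subseteq> cylA m \<omega>"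
  by (auto simp: cylA_def)

lemma cylA_measurable: "cylA n \<omega> \<in> sets seq_space"
proof (induction n)
  case 0
  show ?case using sets.top[of seq_space] by (simp add: cylA_def)
next
  case (Suc n)
  then show ?case unfolding cylA_Suc by (intro sets.Int coordinate_set_measurable)
qed

text \<open>Prepending a letter, \<open>case_nat a \<eta>\<close> = a\<eta>, is measurable and right inverse to the
  shift; it turns images under the shift into preimages.\<close>

lemma prepend_measurable: "(\<lambda>\<eta>::nat\<Rightarrow>'a. case_nat a \<eta>) \<in> measurable seq_space seq_space"
  unfolding seq_space_def
proof (rule measurable_PiM_single')
  fix i :: nat
  show "(\<lambda>\<eta>::nat\<Rightarrow>'a. case_nat a \<eta> i) \<in> measurable (Pi\<^sub>M UNIV (\<lambda>_. count_space UNIV)) (count_space UNIV)"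
    by (cases i) (auto intro: measurable_component_singleton)
qed (auto simp: space_PiM)

lemma shift_measurable: "(shift :: (nat \<Rightarrow> 'a) \<Rightarrow> _) \<in> measurable seq_space seq_space"
  unfolding seq_space_def
proof (rule measurable_PiM_single')
  fix i :: nat
  show "(\<lambda>\<eta>::nat\<Rightarrow>'a. shift \<eta> i) \<in> measurable (Pi\<^sub>M UNIV (\<lambda>_. count_space UNIV)) (count_space UNIV)"
    unfolding shift_def by (rule measurable_component_singleton) simp
qed (auto simp: space_PiM)

lemma shift_image_cyl1: "shift ` (E \<inter> cyl1 a) = (\<lambda>\<eta>. case_nat a \<eta>) -` E"
proof (intro equalityI subsetI)
  fix x assume "x \<in> shift ` (E \<inter> cyl1 a)"
  then obtain \<xi> where x: "x = shift \<xi>" "\<xi> \<in> E" "\<xi> 0 = a" by (auto simp: cyl1_def)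
  have "case_nat a (shift \<xi>) = \<xi>"
    using x(3) by (auto simp: fun_eq_iff shift_def split: nat.split)
  with x show "x \<in> (\<lambda>\<eta>. case_nat a \<eta>) -` E" by simp
next
  fix \<eta> assume "\<eta> \<in> (\<lambda>\<eta>. case_nat a \<eta>) -` E"
  then have "case_nat a \<eta> \<in> E \<inter> cyl1 a" by (simp add: cyl1_def)
  moreover have "shift (case_nat a \<eta>) = \<eta>" by (simp add: shift_def)
  ultimately show "\<eta> \<in> shift ` (E \<inter> cyl1 a)" by (metis image_eqI)
qed

lemma prepend_Omega_S: "case_nat a \<eta> \<in> Omega_S S \<longleftrightarrow> S a (\<eta> 0) \<and> \<eta> \<in> Omega_S S"
proof
  assume h: "case_nat a \<eta> \<in> Omega_S S"
  have "S (case_nat a \<eta> j) (case_nat a \<eta> (Suc j))" for j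
    using h by (simp add: Omega_S_def)
  from this[of 0] this[of "Suc j" for j] show "S a (\<eta> 0) \<and> \<eta> \<in> Omega_S S"
    by (simp add: Omega_S_def)
next
  assume h: "S a (\<eta> 0) \<and> \<eta> \<in> Omega_S S"
  have "S (case_nat a \<eta> j) (case_nat a \<eta> (Suc j))" for j
    using h by (cases j) (auto simp: Omega_S_def)
  then show "case_nat a \<eta> \<in> Omega_S S" by (simp add: Omega_S_def)
qed

lemma prepend_cylA: "case_nat a \<eta> \<in> cylA (Suc n) \<omega> \<longleftrightarrow> a = \<omega> 0 \<and> \<eta> \<in> cylA n (shift \<omega>)"
proof
  assume h: "case_nat a \<eta> \<in> cylA (Suc n) \<omega>"
  have "case_nat a \<eta> j = \<omega> j" if "j < Suc n" for j
    using h that by (simp add: cylA_def)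
  from this[of 0] this[of "Suc j" for j] show "a = \<omega> 0 \<and> \<eta> \<in> cylA n (shift \<omega>)"
    by (simp add: cylA_def shift_def)
next
  assume h: "a = \<omega> 0 \<and> \<eta> \<in> cylA n (shift \<omega>)"
  have "case_nat a \<eta> j = \<omega> j" if "j < Suc n" for j
    using h that by (cases j) (auto simp: cylA_def shift_def)
  then show "case_nat a \<eta> \<in> cylA (Suc n) \<omega>" by (simp add: cylA_def)
qed

lemma open_contains_cylinder:
  assumes "openin seq_topology T" and "\<omega> \<in> T"
  shows "\<exists>N. cylA N \<omega> \<subseteq> T"
proof -
  obtain U where U: "finite {i \<in> UNIV. U i \<noteq> topspace (discrete_topology UNIV)}"
      "\<omega> \<in> Pi\<^sub>E UNIV U" "Pi\<^sub>E UNIV U \<subseteq> T"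
    using assms unfolding seq_topology_def openin_product_topology_alt by blast
  have "finite {i. U i \<noteq> UNIV}" using U(1) by simp
  then obtain N where N: "{i. U i \<noteq> UNIV} \<subseteq> {..<N}" using finite_nat_iff_bounded by blast
  have "cylA N \<omega> \<subseteq> Pi\<^sub>E UNIV U"
  proof
    fix \<eta> assume "\<eta> \<in> cylA N \<omega>"
    have "\<eta> i \<in> U i" for i
    proof (cases "i < N")
      case True
      then show ?thesis using \<open>\<eta> \<in> cylA N \<omega>\<close> U(2) by (auto simp: cylA_def PiE_iff)
    next
      case False
      then have "U i = UNIV" using N by auto
      then show ?thesis by simp
    qed
    then show "\<eta> \<in> Pi\<^sub>E UNIV U" by (simp add: PiE_iff)
  qed
  with U(3) show ?thesis by blast
qed


lemma density_nearly_constant: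
  fixes f :: "'b \<Rightarrow> real"
  assumes f: "f \<in> borel_measurable M" and E: "E \<in> sets M"
    and q: "emeasure M E = ennreal q" "0 \<le> q"
    and close: "\<And>x. x \<in> E \<Longrightarrow> \<bar>f x - c\<bar> \<le> e" and "0 \<le> c" "0 \<le> e"
  shows "\<bar>measure (density M (\<lambda>x. ennreal (f x))) E - c * q\<bar> \<le> e * q"
proof -
  have upper: "ennreal (f x) * indicator E x \<le> ennreal (c + e) * indicator E x" for x
    using close[of x] by (cases "x \<in> E") (auto intro!: ennreal_leI)
  have lower: "ennreal (c - e) * indicator E x \<le> ennreal (f x) * indicator E x" for x
    using close[of x] by (cases "x \<in> E") (auto intro!: ennreal_leI)
  have const: "(\<integral>\<^sup>+ x. ennreal d * indicator E x \<partial>M) = ennreal (d * q)" for d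
    using q by (simp add: nn_integral_cmult_indicator[OF E] ennreal_mult'')
  have le_const: "(\<integral>\<^sup>+ x. ennreal (f x) * indicator E x \<partial>M) \<le> ennreal ((c + e) * q)"
    unfolding const[symmetric] by (intro nn_integral_mono upper)
  have const_le: "ennreal ((c - e) * q) \<le> (\<integral>\<^sup>+ x. ennreal (f x) * indicator E x \<partial>M)"
    unfolding const[symmetric] by (intro nn_integral_mono lower)
  have dens: "emeasure (density M (\<lambda>x. ennreal (f x))) E = (\<integral>\<^sup>+ x. ennreal (f x) * indicator E x \<partial>M)"
    using f E by (intro emeasure_density) auto
  have "emeasure (density M (\<lambda>x. ennreal (f x))) E \<noteq> \<top>"
    unfolding dens using order.strict_trans1[OF le_const ennreal_less_top] by simp
  then have I: "ennreal (measure (density M (\<lambda>x. ennreal (f x))) E) = (\<integral>\<^sup>+ x. ennreal (f x) * indicator E x \<partial>M)"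
    using emeasure_eq_ennreal_measure dens by metis
  have "measure (density M (\<lambda>x. ennreal (f x))) E \<le> (c + e) * q"
    using le_const \<open>0 \<le> c\<close> \<open>0 \<le> e\<close> q(2) unfolding I[symmetric] by simp
  moreover have "(c - e) * q \<le> measure (density M (\<lambda>x. ennreal (f x))) E"
    using const_le unfolding I[symmetric] by simp
  ultimately show ?thesis by (simp add: abs_le_iff algebra_simps)
qed

lemma ratio_tendsto:
  fixes p q :: "nat \<Rightarrow> real"
  assumes pos: "\<And>n. 0 < q n"
    and close: "\<And>e. 0 < e \<Longrightarrow> eventually (\<lambda>n. \<bar>p n - c * q n\<bar> \<le> e * q n) sequentially"
  shows "(\<lambda>n. p n / q n) \<longlonglongrightarrow> c"
proof (rule LIMSEQ_I)
  fix e :: real assume "0 < e"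
  then have "eventually (\<lambda>n. \<bar>p n - c * q n\<bar> \<le> e / 2 * q n) sequentially" by (intro close) simp
  moreover have "\<bar>p n / q n - c\<bar> < e" if "\<bar>p n - c * q n\<bar> \<le> e / 2 * q n" for n
  proof -
    have "p n / q n - c = (p n - c * q n) / q n"
      using pos[of n] by (simp add: diff_divide_distrib)
    then have "\<bar>p n / q n - c\<bar> = \<bar>p n - c * q n\<bar> / q n"
      using pos[of n] by simp
    also have "\<dots> \<le> e / 2" using that pos[of n] by (simp add: divide_le_eq)
    finally show ?thesis using \<open>0 < e\<close> by simp
  qed
  ultimately show "\<exists>N. \<forall>n\<ge>N. norm (p n / q n - c) < e"
    unfolding eventually_sequentially by auto
qed

lemma telescoping_ratio:
  fixes q :: "nat \<Rightarrow> nat \<Rightarrow> real"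
  assumes nz: "\<And>j m. q j m \<noteq> 0"
  shows "q 0 (n + k) = (\<Prod>j<k. q j (n + k - j) / q (Suc j) (n + k - Suc j)) * q k n"
proof (induction k arbitrary: n)
  case 0 then show ?case by simp
next
  case (Suc k)
  have "q 0 (n + Suc k) = (\<Prod>j<k. q j (Suc n + k - j) / q (Suc j) (Suc n + k - Suc j)) * q k (Suc n)"
    using Suc.IH[of "Suc n"] by simp
  also have "(\<Prod>j<k. q j (Suc n + k - j) / q (Suc j) (Suc n + k - Suc j))
      = (\<Prod>j<k. q j (n + Suc k - j) / q (Suc j) (n + Suc k - Suc j))"
    by simp
  also have "q k (Suc n) = q k (n + Suc k - k) / q (Suc k) (n + Suc k - Suc k) * q (Suc k) n"
    using nz[of "Suc k" n] by (simp add: Suc_diff_le)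
  finally show ?case by (simp add: prod.lessThan_Suc mult.assoc)
qed


section \<open>The measure P o T\<close>

locale jacobian_setting = prob_space P
  for P :: "(nat \<Rightarrow> 'a) measure" +
  fixes S :: "'a \<Rightarrow> 'a \<Rightarrow> bool" and J :: "(nat \<Rightarrow> 'a) \<Rightarrow> real"
  assumes sets_P: "sets P = sets seq_space"
    and invariant: "\<forall>E \<in> sets P. emeasure P (shift -` E) = emeasure P E"
    and full: "emeasure P (Omega_S S) = 1"
    and J_version: "inv_jacobian_version S P J"
    and J_cont: "continuous_map (subtopology seq_topology (Omega_S S)) euclideanreal J"
begin

lemma space_P [simp]: "space P = UNIV"
  using sets_eq_imp_space_eq[OF sets_P] by simp

lemma Omega_S_sets: "Omega_S S \<in> sets P"
  using full emeasure_notin_sets by fastforce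

lemma cylA_sets: "cylA n \<omega> \<in> sets P"
  using sets_P cylA_measurable by simp

lemma shift_vimage_sets: "E \<in> sets P \<Longrightarrow> shift -` E \<in> sets P"
  using measurable_sets[OF shift_measurable, of E] sets_P by simp

lemma prepend_vimage_sets: "E \<in> sets P \<Longrightarrow> (\<lambda>\<eta>. case_nat a \<eta>) -` E \<in> sets P"
  using measurable_sets[OF prepend_measurable, of E a] sets_P by simp

lemma measure_inter_Omega_S: "A \<in> sets P \<Longrightarrow> measure P (A \<inter> Omega_S S) = measure P A"
proof -
  assume A: "A \<in> sets P"
  have "AE x in P. x \<in> Omega_S S"
    using prob_eq_1[OF Omega_S_sets] full by (simp add: measure_def)
  then have "emeasure P (A \<inter> Omega_S S) = emeasure P A"
    by (intro emeasure_eq_AE) (use A Omega_S_sets in auto)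
  then show ?thesis by (simp add: measure_def)
qed

definition Omega_S_events :: "(nat \<Rightarrow> 'a) set set" where
  "Omega_S_events = {E \<in> sets P. E \<subseteq> Omega_S S}"

definition shift_mass :: "(nat \<Rightarrow> 'a) set \<Rightarrow> ennreal" where
  "shift_mass E = (\<integral>\<^sup>+ a. emeasure P ((\<lambda>\<eta>. case_nat a \<eta>) -` E) \<partial>count_space UNIV)"

lemma PT_measure_eq: "PT_measure S P = measure_of (Omega_S S) Omega_S_events shift_mass"
  unfolding PT_measure_def Omega_S_events_def shift_mass_def shift_image_cyl1 ..

lemma Omega_S_events_restrict: "Omega_S_events = sets (restrict_space P (Omega_S S))"
  using sets_restrict_space_iff[of "Omega_S S" P] Omega_S_sets by (auto simp: Omega_S_events_def)

lemma sigma_algebra_Omega_S_events: "sigma_algebra (Omega_S S) Omega_S_events"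
  using sets.sigma_algebra_axioms[of "restrict_space P (Omega_S S)"]
  by (simp add: Omega_S_events_restrict space_restrict_space)

lemma shift_mass_countably_additive: "countably_additive Omega_S_events shift_mass"
  unfolding countably_additive_def
proof (intro allI impI)
  fix A :: "nat \<Rightarrow> (nat \<Rightarrow> 'a) set"
  assume A: "range A \<subseteq> Omega_S_events" "disjoint_family A" "\<Union> (range A) \<in> Omega_S_events"
  have "A i \<in> sets P" for i using A(1) by (auto simp: Omega_S_events_def)
  then have pre_sets: "range (\<lambda>i. (\<lambda>\<eta>. case_nat a \<eta>) -` A i) \<subseteq> sets P" for a
    using prepend_vimage_sets by blast
  have pre_disj: "disjoint_family (\<lambda>i. (\<lambda>\<eta>. case_nat a \<eta>) -` A i)" for a
    using A(2) unfolding disjoint_family_on_def by auto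
  have "(\<Sum>i. shift_mass (A i))
      = (\<integral>\<^sup>+ a. (\<Sum>i. emeasure P ((\<lambda>\<eta>. case_nat a \<eta>) -` A i)) \<partial>count_space UNIV)"
    unfolding shift_mass_def by (rule nn_integral_suminf[symmetric]) auto
  also have "\<dots> = (\<integral>\<^sup>+ a. emeasure P (\<Union>i. (\<lambda>\<eta>. case_nat a \<eta>) -` A i) \<partial>count_space UNIV)"
    using suminf_emeasure[OF pre_sets pre_disj] by simp
  also have "\<dots> = shift_mass (\<Union> (range A))"
    unfolding shift_mass_def by (simp add: vimage_UN)
  finally show "(\<Sum>i. shift_mass (A i)) = shift_mass (\<Union> (range A))" .
qed

lemma sets_PT: "sets (PT_measure S P) = Omega_S_events"
  unfolding PT_measure_eq using sigma_algebra.sets_measure_of_eq[OF sigma_algebra_Omega_S_events] .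

lemma emeasure_PT: "E \<in> Omega_S_events \<Longrightarrow> emeasure (PT_measure S P) E = shift_mass E"
  unfolding PT_measure_eq
  by (rule emeasure_measure_of_sigma[OF sigma_algebra_Omega_S_events _ shift_mass_countably_additive])
     (simp add: positive_def shift_mass_def)

lemma cylinder_event: "cylA n \<omega> \<inter> Omega_S S \<in> Omega_S_events"
  using cylA_sets Omega_S_sets by (auto simp: Omega_S_events_def)

text \<open>Only the letter \<open>\<eta> 0\<close> contributes to the sum, and it may be prepended because the
  transition from \<open>\<eta> 0\<close> to \<open>\<eta> 1\<close> is allowed.\<close>

lemma PT_cylinder:
  assumes \<eta>: "\<eta> \<in> Omega_S S" and n: "1 \<le> n"
  shows "emeasure (PT_measure S P) (cylA (Suc n) \<eta> \<inter> Omega_S S) = emeasure P (cylA n (shift \<eta>))"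
proof -
  let ?C = "cylA n (shift \<eta>) \<inter> Omega_S S"
  have "S (\<eta> 0) (\<eta> 1)" using \<eta> by (simp add: Omega_S_def)
  moreover have "\<xi> \<in> cylA n (shift \<eta>) \<Longrightarrow> \<xi> 0 = \<eta> 1" for \<xi>
    using n by (auto simp: cylA_def shift_def)
  ultimately have pre: "(\<lambda>\<xi>. case_nat a \<xi>) -` (cylA (Suc n) \<eta> \<inter> Omega_S S)
      = (if a = \<eta> 0 then ?C else {})" for a
    by (cases "a = \<eta> 0") (auto simp: prepend_cylA prepend_Omega_S)
  have "emeasure (PT_measure S P) (cylA (Suc n) \<eta> \<inter> Omega_S S)
      = (\<integral>\<^sup>+ a. emeasure P ?C * indicator {\<eta> 0} a \<partial>count_space UNIV)"
    unfolding emeasure_PT[OF cylinder_event] shift_mass_def pre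
    by (intro nn_integral_cong) simp
  also have "\<dots> = emeasure P ?C" by (simp add: nn_integral_cmult_indicator)
  also have "\<dots> = emeasure P (cylA n (shift \<eta>))"
    using measure_inter_Omega_S[OF cylA_sets] by (simp add: emeasure_eq_measure)
  finally show ?thesis .
qed


section \<open>Cylinder ratios converge to the Jacobian\<close>

lemma J_nonneg: "x \<in> Omega_S S \<Longrightarrow> 0 \<le> J x"
  using J_version by (simp add: inv_jacobian_version_def)

lemma J_measurable: "J \<in> borel_measurable (PT_measure S P)"
  using J_version by (simp add: inv_jacobian_version_def)

lemma restrict_eq_density: "restrict_space P (Omega_S S) = density (PT_measure S P) (\<lambda>x. ennreal (J x))"
  using J_version by (simp add: inv_jacobian_version_def)

lemma J_nearly_constant_on_cylinder:
  assumes \<eta>: "\<eta> \<in> Omega_S S" and e: "0 < e"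
  shows "\<exists>N. \<forall>\<xi> \<in> cylA N \<eta> \<inter> Omega_S S. \<bar>J \<xi> - J \<eta>\<bar> < e"
proof -
  have "topspace (subtopology seq_topology (Omega_S S)) = Omega_S S"
    by (simp add: seq_topology_def)
  moreover have "openin (subtopology seq_topology (Omega_S S))
      {x \<in> topspace (subtopology seq_topology (Omega_S S)). J x \<in> ball (J \<eta>) e}"
    by (rule openin_continuous_map_preimage[OF J_cont]) simp
  ultimately have "openin (subtopology seq_topology (Omega_S S)) {x \<in> Omega_S S. J x \<in> ball (J \<eta>) e}"
    by simp
  then obtain T where T: "openin seq_topology T"
      "{x \<in> Omega_S S. J x \<in> ball (J \<eta>) e} = T \<inter> Omega_S S"
    unfolding openin_subtopology by blast
  have "\<eta> \<in> {x \<in> Omega_S S. J x \<in> ball (J \<eta>) e}" using \<eta> e by simp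
  then have "\<eta> \<in> T" unfolding T(2) by blast
  then obtain N where N: "cylA N \<eta> \<subseteq> T" using open_contains_cylinder[OF T(1)] by blast
  show ?thesis
  proof (intro exI ballI)
    fix \<xi> assume "\<xi> \<in> cylA N \<eta> \<inter> Omega_S S"
    then have "\<xi> \<in> T \<inter> Omega_S S" using N by blast
    then have "J \<xi> \<in> ball (J \<eta>) e" unfolding T(2)[symmetric] by blast
    then show "\<bar>J \<xi> - J \<eta>\<bar> < e" by (simp add: dist_real_def abs_minus_commute)
  qed
qed

text \<open>One step of the argument: \<open>P(A_{n+1}^\<eta>)\<close> is asymptotically \<open>J \<eta> \<cdot> P(A_n^{T \<eta>})\<close>,
  since \<open>P\<close> has density \<open>J\<close> with respect to \<open>P o T\<close> and \<open>P o T\<close> gives the cylinder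
  \<open>A_{n+1}^\<eta>\<close> the mass \<open>P(A_n^{T \<eta>})\<close>.\<close>

lemma cylinder_step_estimate:
  assumes \<eta>: "\<eta> \<in> Omega_S S" and e: "0 < e"
  shows "eventually (\<lambda>n. \<bar>measure P (cylA (Suc n) \<eta>) - J \<eta> * measure P (cylA n (shift \<eta>))\<bar>
           \<le> e * measure P (cylA n (shift \<eta>))) sequentially"
proof -
  obtain N where N: "\<forall>\<xi> \<in> cylA N \<eta> \<inter> Omega_S S. \<bar>J \<xi> - J \<eta>\<bar> < e"
    using J_nearly_constant_on_cylinder[OF \<eta> e] by blast
  have "\<bar>measure P (cylA (Suc n) \<eta>) - J \<eta> * measure P (cylA n (shift \<eta>))\<bar>
      \<le> e * measure P (cylA n (shift \<eta>))" if n: "Suc N \<le> n" for n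
  proof -
    let ?E = "cylA (Suc n) \<eta> \<inter> Omega_S S"
    have E: "?E \<in> sets (PT_measure S P)" unfolding sets_PT by (rule cylinder_event)
    have "?E \<subseteq> cylA N \<eta> \<inter> Omega_S S" using cylA_antimono[of N "Suc n"] n by auto
    then have close: "\<bar>J \<xi> - J \<eta>\<bar> \<le> e" if "\<xi> \<in> ?E" for \<xi>
      using N that less_imp_le by blast
    have "emeasure (PT_measure S P) ?E = ennreal (measure P (cylA n (shift \<eta>)))"
      using PT_cylinder[OF \<eta>] n by (simp add: emeasure_eq_measure)
    from density_nearly_constant[OF J_measurable E this _ close J_nonneg[OF \<eta>]] e
    have "\<bar>measure (restrict_space P (Omega_S S)) ?E - J \<eta> * measure P (cylA n (shift \<eta>))\<bar>
        \<le> e * measure P (cylA n (shift \<eta>))"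
      by (simp add: restrict_eq_density)
    moreover have "measure (restrict_space P (Omega_S S)) ?E = measure P (cylA (Suc n) \<eta>)"
      using measure_inter_Omega_S[OF cylA_sets] Omega_S_sets
      by (simp add: measure_restrict_space)
    ultimately show ?thesis by simp
  qed
  then show ?thesis unfolding eventually_sequentially by blast
qed

text \<open>Shift invariance propagates positivity of cylinders along the orbit:
  \<open>P(A_n^{T \<eta>}) = P(T^{-1} A_n^{T \<eta>}) \<ge> P(A_{n+1}^\<eta>)\<close>.\<close>

lemma shift_Omega_P: "\<eta> \<in> Omega_P P \<Longrightarrow> shift \<eta> \<in> Omega_P P"
proof -
  assume \<eta>: "\<eta> \<in> Omega_P P"
  have "0 < measure P (cylA n (shift \<eta>))" for n
  proof -
    have "cylA (Suc n) \<eta> \<subseteq> shift -` cylA n (shift \<eta>)"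
      by (auto simp: cylA_def shift_def)
    have "0 < measure P (cylA (Suc n) \<eta>)" using \<eta> by (simp add: Omega_P_def)
    also have "\<dots> \<le> measure P (shift -` cylA n (shift \<eta>))"
      using \<open>cylA (Suc n) \<eta> \<subseteq> _\<close> by (intro finite_measure_mono shift_vimage_sets cylA_sets)
    also have "\<dots> = measure P (cylA n (shift \<eta>))"
      using invariant cylA_sets by (simp add: measure_def)
    finally show ?thesis .
  qed
  then show ?thesis by (simp add: Omega_P_def)
qed

text \<open>Points charged by \<open>P\<close> are admissible: a forbidden transition in \<open>\<omega>\<close> gives a cylinder
  disjoint from \<open>Omega_S S\<close>, hence of measure zero.\<close>

lemma Omega_P_subset_Omega_S: "Omega_P P \<subseteq> Omega_S S"
proof
  fix \<omega> assume \<omega>: "\<omega> \<in> Omega_P P"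
  show "\<omega> \<in> Omega_S S"
  proof (rule ccontr)
    assume "\<omega> \<notin> Omega_S S"
    then obtain j where j: "\<not> S (\<omega> j) (\<omega> (Suc j))" by (auto simp: Omega_S_def)
    have "\<xi> j = \<omega> j" "\<xi> (Suc j) = \<omega> (Suc j)" if "\<xi> \<in> cylA (Suc (Suc j)) \<omega>" for \<xi>
      using that by (simp_all add: cylA_def)
    then have "cylA (Suc (Suc j)) \<omega> \<inter> Omega_S S = {}"
      using j by (force simp: Omega_S_def)
    then have "measure P (cylA (Suc (Suc j)) \<omega>) = 0"
      by (metis measure_empty measure_inter_Omega_S cylA_sets)
    moreover have "0 < measure P (cylA (Suc (Suc j)) \<omega>)" using \<omega> by (simp add: Omega_P_def)
    ultimately show False by simp
  qed
qed

lemma funpow_shift_Omega_P: "\<omega> \<in> Omega_P P \<Longrightarrow> (shift ^^ j) \<omega> \<in> Omega_P P"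
  by (induction j) (simp_all add: shift_Omega_P)

definition step_ratio :: "(nat \<Rightarrow> 'a) \<Rightarrow> nat \<Rightarrow> real" where
  "step_ratio \<eta> n = measure P (cylA (Suc n) \<eta>) / measure P (cylA n (shift \<eta>))"

lemma step_ratio_tendsto:
  assumes \<eta>: "\<eta> \<in> Omega_P P"
  shows "step_ratio \<eta> \<longlonglongrightarrow> J \<eta>"
  unfolding step_ratio_def
proof (rule ratio_tendsto)
  show "0 < measure P (cylA n (shift \<eta>))" for n
    using shift_Omega_P[OF \<eta>] by (simp add: Omega_P_def)
  show "eventually (\<lambda>n. \<bar>measure P (cylA (Suc n) \<eta>) - J \<eta> * measure P (cylA n (shift \<eta>))\<bar>
      \<le> e * measure P (cylA n (shift \<eta>))) sequentially" if "0 < e" for e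
    using cylinder_step_estimate[OF _ that] \<eta> Omega_P_subset_Omega_S by blast
qed

lemma beta_as_product:
  assumes \<omega>: "\<omega> \<in> Omega_P P" and per: "(shift ^^ r) \<omega> = \<omega>"
  shows "beta P r \<omega> n = (\<Prod>j<r. step_ratio ((shift ^^ j) \<omega>) (n + r - Suc j))"
proof -
  define q where "q j m = measure P (cylA m ((shift ^^ j) \<omega>))" for j m
  have q_pos: "0 < q j m" for j m
    using funpow_shift_Omega_P[OF \<omega>] by (simp add: q_def Omega_P_def)
  have "cylA (n + r) \<omega> \<inter> cylA n \<omega> = cylA (n + r) \<omega>" using cylA_antimono[of n "n + r"] by auto
  then have "beta P r \<omega> n = q 0 (n + r) / q 0 n" by (simp add: beta_def q_def)
  also have "q 0 (n + r) = (\<Prod>j<r. q j (n + r - j) / q (Suc j) (n + r - Suc j)) * q r n"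
    by (intro telescoping_ratio) (metis q_pos less_irrefl)
  also have "q r n = q 0 n" by (simp add: q_def per)
  finally have "beta P r \<omega> n = (\<Prod>j<r. q j (n + r - j) / q (Suc j) (n + r - Suc j))"
    using q_pos[of 0 n] by simp
  also have "\<dots> = (\<Prod>j<r. q j (Suc (n + r - Suc j)) / q (Suc j) (n + r - Suc j))"
    by (intro prod.cong) (auto simp: Suc_diff_Suc)
  finally show ?thesis by (simp add: q_def step_ratio_def)
qed

end

theorem theorem3:
  fixes P :: "(nat \<Rightarrow> 'a) measure" and S :: "'a \<Rightarrow> 'a \<Rightarrow> bool"
    and J :: "(nat \<Rightarrow> 'a) \<Rightarrow> real" and \<omega> :: "nat \<Rightarrow> 'a" and r :: nat
  assumes alphabet: "countable (UNIV :: 'a set)" "\<exists>a b :: 'a. a \<noteq> b"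
    and prob: "prob_space P" and sets_P: "sets P = sets seq_space"
    and invariant: "\<forall>E \<in> sets P. emeasure P (shift -` E) = emeasure P E"
    and mixing: "psi_mixing P"
    and S_rows: "\<forall>a. \<exists>b. S a b" and S_cols: "\<forall>b. \<exists>a. S a b"
    and full: "emeasure P (Omega_S S) = 1"
    and top_mix: "topologically_mixing (subtopology seq_topology (Omega_S S)) shift"
    and J_version: "inv_jacobian_version S P J"
    and J_cont: "continuous_map (subtopology seq_topology (Omega_S S)) euclideanreal J"
    and \<omega>_P: "\<omega> \<in> Omega_P P"
    and period: "min_period shift \<omega> r"
  shows "(\<lambda>n. beta P r \<omega> n) \<longlonglongrightarrow> (\<Prod>j<r. J ((shift ^^ j) \<omega>))"
proof -
  interpret jacobian_setting P S J
    using prob sets_P invariant full J_version J_cont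
    by (simp add: jacobian_setting_def jacobian_setting_axioms_def)
  have per: "(shift ^^ r) \<omega> = \<omega>" using period by (simp add: min_period_def)
  have "(\<lambda>n. \<Prod>j<r. step_ratio ((shift ^^ j) \<omega>) (n + (r - Suc j))) \<longlonglongrightarrow> (\<Prod>j<r. J ((shift ^^ j) \<omega>))"
    by (intro tendsto_prod LIMSEQ_ignore_initial_segment step_ratio_tendsto funpow_shift_Omega_P \<omega>_P)
  moreover have "beta P r \<omega> n = (\<Prod>j<r. step_ratio ((shift ^^ j) \<omega>) (n + (r - Suc j)))" for n
    unfolding beta_as_product[OF \<omega>_P per] by (intro prod.cong) auto
  ultimately show ?thesis by simp
qed

end
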